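(* For all integers $n,k\ge0$, the number of bilateral Dyck paths of semilength $n$ with $k$ up-steps at odd height equals the number of bilateral Dyck paths of semilength $n$ with $k$ peaks.
   Context: A bilateral Dyck path is a lattice path starting at $(0,0)$ with steps $(1,1)$ (up-steps) and $(1,-1)$ (down-steps) ending on the line $y=0$. The semilength is half the number of steps. An up-step is at height $j$ if it goes from $(i-1,j-1)$ to $(i,j)$; it is at odd height if $j$ is odd. A peak is an up-step immediately followed by a down-step. *)

theory Defs
  imports Main
begin

text \<open>A lattice path is encoded as a list of steps: True = up-step (1,1), False = down-step (1,-1).\<close>

definition step_val :: "bool \<Rightarrow> int" where
  "step_val b = (if b then 1 else -1)"

definition height :: "bool list \<Rightarrow> nat \<Rightarrow> int" where
  "height p i = sum_list (map step_val (take i p))"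

text \<open>Bilateral Dyck paths of semilength n: 2n steps, start at (0,0), end on y = 0
  (the path may go below the x-axis).\<close>
definition bilateral_dyck :: "nat \<Rightarrow> bool list set" where
  "bilateral_dyck n = {p. length p = 2 * n \<and> height p (length p) = 0}"

text \<open>The (i+1)-th step (index i) is an up-step going from height j-1 to j with
  j = height p (Suc i); it is at odd height if j is odd.\<close>
definition odd_up_steps :: "bool list \<Rightarrow> nat" where
  "odd_up_steps p = card {i. i < length p \<and> p ! i \<and> odd (height p (Suc i))}"

definition peaks :: "bool list \<Rightarrow> nat" where
  "peaks p = card {i. Suc i < length p \<and> p ! i \<and> \<not> p ! Suc i}"

end

theory Submission
  imports Defs
begin

text \<open>Both numbers equal C(n,k)^2. Every step changes the height by 1, so the height after i steps
  has the parity of i, and the up-step with index i (counting from 0) is at odd height exactly when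
  i is even. A bilateral Dyck path with k up-steps at odd height is therefore a choice of k of the
  n even indices and n - k of the n odd indices, giving C(n,k) C(n,n-k).
  For peaks, removing the first step shows that the words with a up-steps and b down-steps having k
  peaks number C(a,k) C(b,k); the recursion must be carried together with the same count for words
  preceded by an extra up-step, which is C(a+1,k) times the number of compositions of b into k parts.\<close>

lemma finite_bool_lists_length: "finite {p :: bool list. length p = m \<and> P p}"
  using finite_lists_length_eq[of "UNIV :: bool set" m] by (rule rev_finite_subset) auto

lemma card_lists_length_0: "card {p. length p = 0 \<and> P p} = (if P [] then 1 else 0)"
  by (simp add: Collect_conv_if)

lemma card_bool_lists_length_Suc:
  "card {p. length p = Suc m \<and> P p}
     = card {q. length q = m \<and> P (True # q)} + card {q. length q = m \<and> P (False # q)}"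
proof -
  let ?S = "\<lambda>b. {q. length q = m \<and> P (b # q)}"
  have "{p. length p = Suc m \<and> P p} = Cons True ` ?S True \<union> Cons False ` ?S False"
  proof (rule set_eqI)
    fix p show "p \<in> {p. length p = Suc m \<and> P p} \<longleftrightarrow> p \<in> Cons True ` ?S True \<union> Cons False ` ?S False"
      by (cases p; cases "hd p") auto
  qed
  also have "card \<dots> = card (Cons True ` ?S True) + card (Cons False ` ?S False)"
    by (rule card_Un_disjoint) (auto simp: finite_bool_lists_length)
  also have "\<dots> = card (?S True) + card (?S False)"
    by (simp add: card_image)
  finally show ?thesis .
qed

definition ups_at_parity :: "bool \<Rightarrow> bool list \<Rightarrow> nat" where
  "ups_at_parity e p = card {i. i < length p \<and> p ! i \<and> even i = e}"

lemma ups_at_parity_Nil [simp]: "ups_at_parity e [] = 0"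
  by (simp add: ups_at_parity_def)

lemma ups_at_parity_Cons [simp]:
  "ups_at_parity e (x # q) = (if e \<and> x then 1 else 0) + ups_at_parity (\<not> e) q"
proof -
  let ?I = "{i. i < length q \<and> q ! i \<and> even i = (\<not> e)}"
  have "{i. i < length (x # q) \<and> (x # q) ! i \<and> even i = e} = (if e \<and> x then {0} else {}) \<union> Suc ` ?I"
    by (auto simp: image_iff less_Suc_eq_0_disj)
  moreover have "finite ?I"
    by (rule finite_subset[of _ "{..<length q}"]) auto
  ultimately show ?thesis
    by (simp add: ups_at_parity_def card_image)
qed

lemma count_list_True_eq_ups_at_parity:
  "count_list p True = ups_at_parity True p + ups_at_parity False p"
  by (induction p) auto

lemma sum_list_map_step_val:
  "sum_list (map step_val p) = int (count_list p True) - int (count_list p False)"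
  by (induction p) (auto simp: step_val_def)

lemma odd_sum_list_step_val: "odd (sum_list (map step_val xs)) \<longleftrightarrow> odd (length xs)"
  by (induction xs) (auto simp: step_val_def)

lemma odd_up_steps_eq_ups_at_parity: "odd_up_steps p = ups_at_parity True p"
proof -
  have "{i. i < length p \<and> p ! i \<and> odd (height p (Suc i))} = {i. i < length p \<and> p ! i \<and> even i = True}"
    by (auto simp: height_def odd_sum_list_step_val)
  then show ?thesis
    by (simp add: odd_up_steps_def ups_at_parity_def)
qed

lemma card_lists_by_ups_at_parity:
  "card {p. length p = m \<and> ups_at_parity True p = k \<and> ups_at_parity False p = j}
     = (Suc m div 2 choose k) * (m div 2 choose j)"
proof (induction m arbitrary: k j)
  case 0
  then show ?case unfolding card_lists_length_0 by simp
next
  case (Suc m)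
  have "card {p. length p = Suc m \<and> ups_at_parity True p = k \<and> ups_at_parity False p = j}
      = card {q. length q = m \<and> ups_at_parity True q = j \<and> Suc (ups_at_parity False q) = k}
        + card {q. length q = m \<and> ups_at_parity True q = j \<and> ups_at_parity False q = k}"
    by (simp add: card_bool_lists_length_Suc conj_commute conj_left_commute)
  also have "\<dots> = (Suc (m div 2) choose k) * (Suc m div 2 choose j)"
  proof (cases k)
    case 0
    then show ?thesis by (simp add: Suc.IH)
  next
    case (Suc k')
    then show ?thesis
      using Suc.IH[of j k'] Suc.IH[of j k] by (simp add: algebra_simps)
  qed
  finally show ?case by simp
qed

lemma peaks_Nil [simp]: "peaks [] = 0"
  by (simp add: peaks_def)

lemma peaks_singleton [simp]: "peaks [x] = 0"
  by (simp add: peaks_def)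

lemma peaks_Cons_Cons [simp]:
  "peaks (x # y # q) = (if x \<and> \<not> y then 1 else 0) + peaks (y # q)"
proof -
  let ?I = "{i. Suc i < length (y # q) \<and> (y # q) ! i \<and> \<not> (y # q) ! Suc i}"
  have "{i. Suc i < length (x # y # q) \<and> (x # y # q) ! i \<and> \<not> (x # y # q) ! Suc i}
      = (if x \<and> \<not> y then {0} else {}) \<union> Suc ` ?I"
    by (auto simp: image_iff less_Suc_eq_0_disj)
  moreover have "finite ?I"
    by (rule finite_subset[of _ "{..<length (y # q)}"]) auto
  ultimately show ?thesis
    by (simp add: peaks_def card_image)
qed

lemma peaks_False_Cons [simp]: "peaks (False # p) = peaks p"
  by (cases p) auto

text \<open>The number of compositions of b into k positive parts.\<close>
definition compositions :: "nat \<Rightarrow> nat \<Rightarrow> nat" where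
  "compositions b k = (if b = 0 then (if k = 0 then 1 else 0) else if k = 0 then 0 else (b - 1) choose (k - 1))"

lemma card_lists_by_peaks:
  "m = a + b \<Longrightarrow>
     card {p. length p = m \<and> count_list p True = a \<and> peaks p = k} = (a choose k) * (b choose k) \<and>
     card {p. length p = m \<and> count_list p True = a \<and> peaks (True # p) = k} = (Suc a choose k) * compositions b k"
proof (induction m arbitrary: a b k)
  case 0
  then show ?case unfolding card_lists_length_0 by (simp add: compositions_def)
next
  case (Suc m)
  let ?F = "\<lambda>a k. card {q. length q = m \<and> count_list q True = a \<and> peaks q = k}"
  let ?G = "\<lambda>a k. card {q. length q = m \<and> count_list q True = a \<and> peaks (True # q) = k}"
  have too_many_ups: "?F a' k' = 0" "?G a' k' = 0" if "m < a'" for a' k'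
  proof -
    have "{q. length q = m \<and> count_list q True = a' \<and> R q} = {}" for R
      using that count_le_length[of _ True] leD by blast
    then show "?F a' k' = 0" "?G a' k' = 0" by (simp_all only: card.empty)
  qed
  have F: "card {p. length p = Suc m \<and> count_list p True = a \<and> peaks p = k}
      = (case a of 0 \<Rightarrow> 0 | Suc a' \<Rightarrow> ?G a' k) + ?F a k"
    by (cases a) (simp_all add: card_bool_lists_length_Suc)
  have G: "card {p. length p = Suc m \<and> count_list p True = a \<and> peaks (True # p) = k}
      = (case a of 0 \<Rightarrow> 0 | Suc a' \<Rightarrow> ?G a' k) + (case k of 0 \<Rightarrow> 0 | Suc k' \<Rightarrow> ?F a k')"
    by (cases a; cases k) (simp_all add: card_bool_lists_length_Suc)
  have IH: "?F a' k' = (a' choose k') * (b' choose k')"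
    "?G a' k' = (Suc a' choose k') * compositions b' k'" if "m = a' + b'" for a' b' k'
    using Suc.IH[OF that, of k'] by simp_all
  show ?case
  proof (cases a; cases b)
    assume "a = 0" "b = 0"
    then show ?thesis using Suc.prems by simp
  next
    fix b' assume a: "a = 0" and b: "b = Suc b'"
    then have m: "m = 0 + b'" using Suc.prems by simp
    show ?thesis unfolding F G unfolding a b
      by (cases k) (simp_all add: IH[OF m] compositions_def)
  next
    fix a' assume a: "a = Suc a'" and b: "b = 0"
    then have m: "m = a' + 0" and short: "m < Suc a'" using Suc.prems by simp_all
    show ?thesis unfolding F G unfolding a b
      by (cases k) (simp_all add: IH[OF m] too_many_ups[OF short] compositions_def)
  next
    fix a' b' assume a: "a = Suc a'" and b: "b = Suc b'"
    then have m: "m = a' + Suc b'" "m = Suc a' + b'" using Suc.prems by simp_all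
    show ?thesis unfolding F G unfolding a b
      by (cases k) (simp_all add: IH[OF m(1)] IH[OF m(2)] compositions_def algebra_simps)
  qed
qed

lemma count_list_True_add_False: "count_list p True + count_list p False = length p"
  by (induction p) auto

lemma bilateral_dyck_eq: "bilateral_dyck n = {p. length p = 2 * n \<and> count_list p True = n}"
proof -
  have "height p (length p) = 0 \<longleftrightarrow> count_list p True = n" if "length p = 2 * n" for p
    using that count_list_True_add_False[of p] by (simp add: height_def sum_list_map_step_val) linarith
  then show ?thesis
    by (auto simp: bilateral_dyck_def)
qed

lemma card_bilateral_dyck_peaks: "card {p \<in> bilateral_dyck n. peaks p = k} = (n choose k)\<^sup>2"
proof -
  have "{p \<in> bilateral_dyck n. peaks p = k} = {p. length p = n + n \<and> count_list p True = n \<and> peaks p = k}"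
    by (auto simp: bilateral_dyck_eq)
  then show ?thesis
    using card_lists_by_peaks[OF refl, of n n k] by (simp add: power2_eq_square)
qed

lemma card_bilateral_dyck_odd_up_steps:
  "card {p \<in> bilateral_dyck n. odd_up_steps p = k} = (n choose k)\<^sup>2"
proof (cases "k \<le> n")
  case True
  then have "{p \<in> bilateral_dyck n. odd_up_steps p = k}
      = {p. length p = 2 * n \<and> ups_at_parity True p = k \<and> ups_at_parity False p = n - k}"
    by (auto simp: bilateral_dyck_eq odd_up_steps_eq_ups_at_parity count_list_True_eq_ups_at_parity)
  then show ?thesis
    using True by (simp add: card_lists_by_ups_at_parity binomial_symmetric[symmetric] power2_eq_square)
next
  case False
  then have "{p \<in> bilateral_dyck n. odd_up_steps p = k} = {}"
    by (auto simp: bilateral_dyck_eq odd_up_steps_eq_ups_at_parity count_list_True_eq_ups_at_parity)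
  with False show ?thesis
    by (simp only: card.empty binomial_eq_0) simp
qed

theorem corollary2:
  fixes n k :: nat
  shows "card {p \<in> bilateral_dyck n. odd_up_steps p = k} = card {p \<in> bilateral_dyck n. peaks p = k}"
  by (simp only: card_bilateral_dyck_odd_up_steps card_bilateral_dyck_peaks)

end
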